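(* Let $A\in\tilde\omega_n^{0,1}$ and let $C_1,\dots,C_k$ be all the directed cycles of $G_A$. Then $$\operatorname{per}(I-A)=\prod_{i=1}^k\big(1+(-1)^{l(C_i)}w(C_i)\big),$$ where the empty product equals $1$.
   Context: An $n\times n$ matrix is row substochastic if all its entries are nonnegative and each row sum is at most $1$. $\tilde\omega_n^{0,1}$ denotes the set of all $n\times n$ row substochastic matrices with zero main diagonal and at most one positive entry in each row. For an $n\times n$ matrix $A=[a_{ij}]$, $G_A$ is the directed weighted graph on vertices $v_1,\dots,v_n$ having a directed edge $v_i\to v_j$ of weight $a_{ij}$ exactly when $a_{ij}\ne 0$. For a directed cycle $C$ of $G_A$, $l(C)$ is its number of edges and $w(C)$ is the product of the weights of its edges. The permanent is $\operatorname{per}(M)=\sum_{\pi\in S_n}\prod_i m_{i\pi(i)}$, and $I$ is the identity matrix. *)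

theory Defs
  imports "HOL-Analysis.Analysis"
begin

text \<open>n x n real matrices are rendered as real^'n^'n for an arbitrary finite index type 'n
  (so n = CARD('n)).\<close>

definition per :: "real^'n^'n \<Rightarrow> real" where
  "per M = (\<Sum>p\<in>{p. p permutes (UNIV::'n set)}. \<Prod>i\<in>UNIV. M $ i $ p i)"

definition row_substochastic :: "real^'n^'n \<Rightarrow> bool" where
  "row_substochastic A \<longleftrightarrow> (\<forall>i j. 0 \<le> A $ i $ j) \<and> (\<forall>i. (\<Sum>j\<in>UNIV. A $ i $ j) \<le> 1)"

definition omega01 :: "real^'n^'n \<Rightarrow> bool" where
  "omega01 A \<longleftrightarrow> row_substochastic A \<and> (\<forall>i. A $ i $ i = 0)
     \<and> (\<forall>i j k. 0 < A $ i $ j \<longrightarrow> 0 < A $ i $ k \<longrightarrow> j = k)"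

definition is_dcycle_list :: "real^'n^'n \<Rightarrow> 'n list \<Rightarrow> bool" where
  "is_dcycle_list A cs \<longleftrightarrow> cs \<noteq> [] \<and> distinct cs \<and>
     (\<forall>i<length cs. A $ (cs ! i) $ (cs ! (Suc i mod length cs)) \<noteq> 0)"

definition cycle_edges :: "'n list \<Rightarrow> ('n \<times> 'n) set" where
  "cycle_edges cs = {(cs ! i, cs ! (Suc i mod length cs)) | i. i < length cs}"

text \<open>The directed cycles of G_A, each identified with its edge set (this identifies
  rotations of the same cyclic vertex list, i.e. the same cycle).\<close>
definition dcycles :: "real^'n^'n \<Rightarrow> ('n \<times> 'n) set set" where
  "dcycles A = {cycle_edges cs | cs. is_dcycle_list A cs}"

definition cyc_len :: "('n \<times> 'n) set \<Rightarrow> nat" where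
  "cyc_len C = card C"

definition cyc_weight :: "real^'n^'n \<Rightarrow> ('n \<times> 'n) set \<Rightarrow> real" where
  "cyc_weight A C = (\<Prod>(i,j)\<in>C. A $ i $ j)"

end

theory Submission
  imports Defs "HOL-Combinatorics.Cycles"
begin

text \<open>Since every row of A has at most one nonzero entry, the graph G_A is the graph of a partial
  successor function, so its directed cycles are pairwise vertex-disjoint. A permutation p
  contributes a nonzero term to per(I - A) only if it moves each point i to the successor of i,
  i.e. only if p is the product of the cycles of some set S of directed cycles of G_A; its term
  is then the product over C in S of (-1)^l(C) w(C). Summing over all sets S of cycles
  gives the product of the factors 1 + (-1)^l(C) w(C).\<close>

definition traces_cycle :: "('a \<Rightarrow> 'a) \<Rightarrow> 'a list \<Rightarrow> bool" where
  "traces_cycle f cs \<longleftrightarrow> (\<forall>i<length cs. f (cs ! i) = cs ! (Suc i mod length cs))"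

lemma traces_cycle_funpow:
  assumes "traces_cycle f cs" "i < length cs"
  shows "(f ^^ k) (cs ! i) = cs ! ((i + k) mod length cs)"
proof (induction k)
  case 0
  then show ?case using assms(2) by simp
next
  case (Suc k)
  have "(i + k) mod length cs < length cs" using assms(2) by (meson mod_less_divisor le_less_trans zero_le)
  then show ?case using Suc assms(1) by (simp add: traces_cycle_def mod_Suc_eq)
qed

lemma traces_cycle_set_eq_orbit:
  assumes "traces_cycle f cs" "v \<in> set cs"
  shows "set cs = range (\<lambda>k. (f ^^ k) v)"
proof
  obtain i where i: "i < length cs" "v = cs ! i" using assms(2) by (metis in_set_conv_nth)
  have "0 < length cs" using i(1) by linarith
  then show "range (\<lambda>k. (f ^^ k) v) \<subseteq> set cs"
    using traces_cycle_funpow[OF assms(1) i(1)] i by auto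
  have "cs ! j = (f ^^ (j + length cs - i)) v" if "j < length cs" for j
    using traces_cycle_funpow[OF assms(1) i(1)] i that by simp
  then show "set cs \<subseteq> range (\<lambda>k. (f ^^ k) v)" by (auto simp: in_set_conv_nth)
qed

lemma traces_cycle_image:
  assumes "traces_cycle f cs"
  shows "f ` set cs = set cs"
proof
  show "f ` set cs \<subseteq> set cs"
  proof
    fix w assume "w \<in> f ` set cs"
    then obtain v where v: "v \<in> set cs" "w = (f ^^ 1) v" by auto
    then show "w \<in> set cs" using traces_cycle_set_eq_orbit[OF assms v(1)] by blast
  qed
  show "set cs \<subseteq> f ` set cs"
  proof
    fix v assume "v \<in> set cs"
    then obtain j where j: "j < length cs" "v = cs ! j" by (metis in_set_conv_nth)
    define i where "i = (j + length cs - 1) mod length cs"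
    have i: "i < length cs" unfolding i_def using j by (meson mod_less_divisor le_less_trans zero_le)
    have "Suc (j + length cs - 1) = j + length cs" using j by linarith
    then have "Suc i mod length cs = j" using j by (simp add: i_def mod_Suc_eq)
    then have "f (cs ! i) = v" using assms i j by (simp add: traces_cycle_def)
    then show "v \<in> f ` set cs" using i by (metis image_eqI nth_mem)
  qed
qed

lemma cycle_edges_traces_cycle:
  assumes "traces_cycle f cs"
  shows "cycle_edges cs = (\<lambda>v. (v, f v)) ` set cs"
proof -
  have "cycle_edges cs = {(cs ! i, f (cs ! i)) | i. i < length cs}"
    using assms unfolding cycle_edges_def traces_cycle_def by metis
  also have "\<dots> = (\<lambda>v. (v, f v)) ` set cs" by (auto simp: in_set_conv_nth image_iff)
  finally show ?thesis .
qed

lemma traces_cycle_cong: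
  "(\<And>v. v \<in> set cs \<Longrightarrow> f v = g v) \<Longrightarrow> traces_cycle f cs \<longleftrightarrow> traces_cycle g cs"
  unfolding traces_cycle_def by (metis nth_mem)

lemma traces_cycle_support:
  assumes "permutation p"
  shows "traces_cycle p (support p a)"
proof -
  let ?m = "least_power p a"
  have m: "(p ^^ ?m) a = a" "0 < ?m" using least_power_of_permutation[OF assms] by auto
  have "p ((p ^^ i) a) = (p ^^ (Suc i mod ?m)) a" if "i < ?m" for i
  proof (cases "Suc i < ?m")
    case True
    then show ?thesis by simp
  next
    case False
    then have "Suc i = ?m" using that by simp
    then show ?thesis using m(1) by (metis comp_apply funpow.simps funpow_0 mod_self)
  qed
  with m(2) show ?thesis unfolding traces_cycle_def by simp
qed

definition cycle_vertices :: "('a \<times> 'a) set set \<Rightarrow> 'a set" where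
  "cycle_vertices S = (\<Union>C\<in>S. fst ` C)"

locale omega01_matrix =
  fixes A :: "real^'n^'n"
  assumes omega01: "omega01 A"
begin

text \<open>On a zero row succ is an arbitrary vertex; it only matters where A $ i $ succ i \<noteq> 0.\<close>

definition succ :: "'n \<Rightarrow> 'n" where
  "succ i = (SOME j. A $ i $ j \<noteq> 0)"

lemma entry_nonneg: "0 \<le> A $ i $ j"
  using omega01 unfolding omega01_def row_substochastic_def by blast

lemma diag_zero: "A $ i $ i = 0"
  using omega01 unfolding omega01_def by blast

lemma nonzero_entry_at_succ:
  assumes "A $ i $ j \<noteq> 0"
  shows "j = succ i"
proof -
  have "A $ i $ succ i \<noteq> 0" unfolding succ_def using assms by (rule someI)
  then have "0 < A $ i $ succ i" using entry_nonneg[of i "succ i"] by linarith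
  moreover have "0 < A $ i $ j" using assms entry_nonneg[of i j] by linarith
  ultimately show ?thesis using omega01 unfolding omega01_def by blast
qed

lemma succ_neq_self: "A $ i $ succ i \<noteq> 0 \<Longrightarrow> succ i \<noteq> i"
  using diag_zero by auto

lemma is_dcycle_list_iff:
  "is_dcycle_list A cs \<longleftrightarrow>
     cs \<noteq> [] \<and> distinct cs \<and> traces_cycle succ cs \<and> (\<forall>v\<in>set cs. A $ v $ succ v \<noteq> 0)"
  unfolding is_dcycle_list_def traces_cycle_def
  by (metis in_set_conv_nth nonzero_entry_at_succ)

lemma dcycleE:
  assumes "C \<in> dcycles A"
  obtains cs where "cs \<noteq> []" "traces_cycle succ cs" "\<forall>v\<in>set cs. A $ v $ succ v \<noteq> 0"
    "C = (\<lambda>v. (v, succ v)) ` set cs" "fst ` C = set cs"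
proof -
  obtain cs where cs: "is_dcycle_list A cs" "C = cycle_edges cs"
    using assms unfolding dcycles_def by blast
  then have "traces_cycle succ cs" by (simp add: is_dcycle_list_iff)
  then have "C = (\<lambda>v. (v, succ v)) ` set cs" using cs(2) cycle_edges_traces_cycle by blast
  then show thesis using that[of cs] cs(1) by (simp add: is_dcycle_list_iff image_image)
qed

lemma dcycle_eq_graph: "C \<in> dcycles A \<Longrightarrow> C = (\<lambda>v. (v, succ v)) ` fst ` C"
  by (metis dcycleE)

lemma dcycle_vertices_orbit:
  "C \<in> dcycles A \<Longrightarrow> v \<in> fst ` C \<Longrightarrow> fst ` C = range (\<lambda>k. (succ ^^ k) v)"
  by (metis dcycleE traces_cycle_set_eq_orbit)

lemma dcycles_disjoint:
  assumes "C1 \<in> dcycles A" "C2 \<in> dcycles A" "v \<in> fst ` C1" "v \<in> fst ` C2"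
  shows "C1 = C2"
  using assms dcycle_eq_graph dcycle_vertices_orbit by metis

lemma succ_image_dcycle: "C \<in> dcycles A \<Longrightarrow> succ ` fst ` C = fst ` C"
  by (metis dcycleE traces_cycle_image)

lemma dcycle_entry_nonzero: "C \<in> dcycles A \<Longrightarrow> v \<in> fst ` C \<Longrightarrow> A $ v $ succ v \<noteq> 0"
  by (metis dcycleE)

lemma dcycle_vertices_nonempty: "C \<in> dcycles A \<Longrightarrow> fst ` C \<noteq> {}"
  by (metis dcycleE set_empty)

lemma dcycle_signed_weight:
  assumes "C \<in> dcycles A"
  shows "(-1) ^ cyc_len C * cyc_weight A C = (\<Prod>i\<in>fst ` C. - A $ i $ succ i)"
proof -
  let ?V = "fst ` C"
  have C: "C = (\<lambda>v. (v, succ v)) ` ?V" using dcycle_eq_graph[OF assms] .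
  have inj: "inj_on (\<lambda>v. (v, succ v)) ?V" by (auto simp: inj_on_def)
  have "cyc_len C = card ?V" unfolding cyc_len_def by (subst C) (rule card_image[OF inj])
  moreover have "cyc_weight A C = (\<Prod>v\<in>?V. A $ v $ succ v)"
    unfolding cyc_weight_def by (subst C) (simp add: prod.reindex[OF inj])
  moreover have "(\<Prod>i\<in>?V. - A $ i $ succ i) = (\<Prod>i\<in>?V. -1) * (\<Prod>i\<in>?V. A $ i $ succ i)"
    by (subst prod.distrib[symmetric]) simp
  ultimately show ?thesis by simp
qed

lemma dcycle_of_moved_point:
  assumes p: "p permutes UNIV"
    and follows_succ: "\<And>i. p i \<noteq> i \<Longrightarrow> p i = succ i \<and> A $ i $ succ i \<noteq> 0"
    and v: "p v \<noteq> v"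
  shows "\<exists>C\<in>dcycles A. v \<in> fst ` C \<and> fst ` C \<subseteq> {i. p i \<noteq> i}"
proof -
  have perm: "permutation p" using p by (simp add: permutes_imp_permutation)
  define cs where "cs = support p v"
  have orbit: "set cs = range (\<lambda>k. (p ^^ k) v)" unfolding cs_def by (rule support_set[OF perm])
  have moved: "set cs \<subseteq> {i. p i \<noteq> i}"
  proof
    fix x assume "x \<in> set cs"
    then obtain k where x: "x = (p ^^ k) v" using orbit by auto
    have "(p ^^ k) (p v) \<noteq> (p ^^ k) v"
      using v inj_fn[OF permutes_inj[OF p]] by (simp add: inj_eq)
    then show "x \<in> {i. p i \<noteq> i}" by (simp add: x funpow_swap1)
  qed
  have "traces_cycle p cs" unfolding cs_def by (rule traces_cycle_support[OF perm])
  then have traces: "traces_cycle succ cs"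
    using traces_cycle_cong[of cs p succ] moved follows_succ by blast
  have "cs \<noteq> []" using least_power_of_permutation(2)[OF perm] by (simp add: cs_def)
  moreover have "distinct cs" unfolding cs_def by (rule cycle_of_permutation[OF perm])
  ultimately have "is_dcycle_list A cs"
    using traces moved follows_succ by (auto simp: is_dcycle_list_iff)
  then have "cycle_edges cs \<in> dcycles A" unfolding dcycles_def by blast
  moreover have "fst ` cycle_edges cs = set cs"
    using cycle_edges_traces_cycle[OF traces] by (simp add: image_image)
  moreover have "v \<in> set cs" using orbit by (metis funpow_0 rangeI)
  ultimately show ?thesis using moved by metis
qed

definition cycle_perm :: "('n \<times> 'n) set set \<Rightarrow> 'n \<Rightarrow> 'n" where
  "cycle_perm S = override_on id succ (cycle_vertices S)"

lemma cycle_perm_moved_iff: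
  "S \<subseteq> dcycles A \<Longrightarrow> cycle_perm S i \<noteq> i \<longleftrightarrow> i \<in> cycle_vertices S"
  unfolding cycle_perm_def cycle_vertices_def
  using dcycle_entry_nonzero succ_neq_self by (auto simp: override_on_def)

lemma cycle_perm_permutes:
  assumes "S \<subseteq> dcycles A"
  shows "cycle_perm S permutes UNIV"
proof -
  let ?V = "cycle_vertices S"
  have "succ ` fst ` C = fst ` C" if "C \<in> S" for C
    using that assms succ_image_dcycle by blast
  then have img: "succ ` ?V = ?V" unfolding cycle_vertices_def image_UN by simp
  have "z \<in> range (cycle_perm S)" for z
  proof (cases "z \<in> ?V")
    case True
    then obtain w where "w \<in> ?V" "z = succ w" using img by blast
    then show ?thesis by (metis cycle_perm_def override_on_apply_in rangeI)
  next
    case False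
    then show ?thesis by (metis cycle_perm_def override_on_apply_notin id_apply rangeI)
  qed
  then have "surj (cycle_perm S)" by blast
  then have "bij (cycle_perm S)" by (simp add: bij_def finite_UNIV_surj_inj)
  then show ?thesis by (rule bij_imp_permutes) simp
qed

lemma cycle_vertices_inj:
  assumes "S \<subseteq> dcycles A" "T \<subseteq> dcycles A" "cycle_vertices S = cycle_vertices T"
  shows "S \<subseteq> T"
proof
  fix C assume C: "C \<in> S"
  then obtain v where v: "v \<in> fst ` C" using dcycle_vertices_nonempty assms(1) by blast
  then have "v \<in> cycle_vertices T" using assms(3) C unfolding cycle_vertices_def by blast
  then obtain C' where "C' \<in> T" "v \<in> fst ` C'" unfolding cycle_vertices_def by blast
  then show "C \<in> T" using dcycles_disjoint[of C C' v] C v assms by blast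
qed

lemma inj_on_cycle_perm: "inj_on cycle_perm (Pow (dcycles A))"
proof (rule inj_onI)
  fix S T assume "S \<in> Pow (dcycles A)" "T \<in> Pow (dcycles A)"
    and eq: "cycle_perm S = cycle_perm T"
  then have S: "S \<subseteq> dcycles A" and T: "T \<subseteq> dcycles A" by auto
  have "i \<in> cycle_vertices S \<longleftrightarrow> i \<in> cycle_vertices T" for i
    using cycle_perm_moved_iff[OF S, of i] cycle_perm_moved_iff[OF T, of i] eq by simp
  then have "cycle_vertices S = cycle_vertices T" by blast
  then show "S = T" using cycle_vertices_inj[OF S T] cycle_vertices_inj[OF T S] by blast
qed

definition per_term :: "('n \<Rightarrow> 'n) \<Rightarrow> real" where
  "per_term p = (\<Prod>i\<in>UNIV. (mat 1 - A) $ i $ p i)"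

lemma I_minus_entry_cycle_perm:
  assumes S: "S \<subseteq> dcycles A"
  shows "(mat 1 - A) $ i $ cycle_perm S i = (if i \<in> cycle_vertices S then - A $ i $ succ i else 1)"
proof (cases "i \<in> cycle_vertices S")
  case True
  then have "cycle_perm S i = succ i" "succ i \<noteq> i"
    using cycle_perm_moved_iff[OF S, of i] by (auto simp: cycle_perm_def)
  with True show ?thesis by (simp add: mat_def)
next
  case False
  then have "cycle_perm S i = i" by (simp add: cycle_perm_def)
  with False show ?thesis by (simp add: mat_def diag_zero)
qed

lemma per_term_cycle_perm:
  assumes S: "S \<subseteq> dcycles A"
  shows "per_term (cycle_perm S) = (\<Prod>C\<in>S. (-1) ^ cyc_len C * cyc_weight A C)"
proof -
  let ?V = "cycle_vertices S"
  have "per_term (cycle_perm S) = (\<Prod>i\<in>UNIV. if i \<in> ?V then - A $ i $ succ i else 1)"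
    unfolding per_term_def using I_minus_entry_cycle_perm[OF S] by simp
  also have "\<dots> = (\<Prod>i\<in>?V. - A $ i $ succ i)"
    using prod.inter_restrict[of UNIV "\<lambda>i. - A $ i $ succ i" ?V] by simp
  also have "\<dots> = (\<Prod>C\<in>S. \<Prod>i\<in>fst ` C. - A $ i $ succ i)"
    unfolding cycle_vertices_def
  proof (rule prod.UNION_disjoint)
    show "\<forall>C\<in>S. \<forall>C'\<in>S. C \<noteq> C' \<longrightarrow> fst ` C \<inter> fst ` C' = {}"
      using S dcycles_disjoint by blast
  qed simp_all
  also have "\<dots> = (\<Prod>C\<in>S. (-1) ^ cyc_len C * cyc_weight A C)"
    using dcycle_signed_weight S by (intro prod.cong) auto
  finally show ?thesis .
qed

lemma per_term_nonzero_imp_cycle_perm: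
  assumes p: "p permutes UNIV" and nz: "per_term p \<noteq> 0"
  shows "p \<in> cycle_perm ` Pow (dcycles A)"
proof -
  have follows_succ: "p i = succ i \<and> A $ i $ succ i \<noteq> 0" if "p i \<noteq> i" for i
  proof -
    have "(mat 1 - A) $ i $ p i \<noteq> 0" using nz unfolding per_term_def by auto
    then have "A $ i $ p i \<noteq> 0" using that by (simp add: mat_def)
    then show ?thesis using nonzero_entry_at_succ by metis
  qed
  define S where "S = {C \<in> dcycles A. fst ` C \<subseteq> {i. p i \<noteq> i}}"
  have "cycle_vertices S = {i. p i \<noteq> i}"
    using dcycle_of_moved_point[OF p follows_succ] unfolding cycle_vertices_def S_def by blast
  then have "p = cycle_perm S"
    using follows_succ by (auto simp: cycle_perm_def override_on_def)
  then show ?thesis unfolding S_def by blast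
qed

theorem per_I_minus_eq_prod_dcycles:
  "per (mat 1 - A) = (\<Prod>C\<in>dcycles A. 1 + (-1) ^ cyc_len C * cyc_weight A C)"
proof -
  let ?x = "\<lambda>C. (-1) ^ cyc_len C * cyc_weight A C"
  have "per (mat 1 - A) = (\<Sum>p\<in>{p. p permutes UNIV}. per_term p)"
    unfolding per_def per_term_def ..
  also have "\<dots> = (\<Sum>p\<in>cycle_perm ` Pow (dcycles A). per_term p)"
    by (rule sum.mono_neutral_right) (use cycle_perm_permutes per_term_nonzero_imp_cycle_perm in auto)
  also have "\<dots> = (\<Sum>S\<in>Pow (dcycles A). \<Prod>C\<in>S. ?x C)"
    by (simp add: sum.reindex[OF inj_on_cycle_perm] per_term_cycle_perm)
  also have "\<dots> = (\<Prod>C\<in>dcycles A. ?x C + 1)"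
    by (simp add: prod_add)
  finally show ?thesis by (simp add: add.commute)
qed

end

theorem mainTheorem7:
  fixes A :: "real^'n^'n"
  assumes "omega01 A"
  shows "per (mat 1 - A) = (\<Prod>C\<in>dcycles A. 1 + (-1) ^ cyc_len C * cyc_weight A C)"
  using omega01_matrix.per_I_minus_eq_prod_dcycles[OF omega01_matrix.intro[OF assms]] .

end
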